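(* For a pseudocompact (Tychonoff) space $X$, $X$ is a $C$-space if and only if $X$ is a finite $C$-space.
   Context: A set is functionally open if it is a cozero set. $X$ is a $C$-space if every sequence $\{\omega_n\}$ of locally finite covers of $X$ by functionally open sets has a $C$-refinement $\{\gamma_n\}$ (each $\gamma_n$ a disjoint family of open sets refining $\omega_n$, with $\bigcup_n\gamma_n$ covering $X$) such that $\bigcup_n\gamma_n$ is a locally finite cover of $X$ by functionally open sets. $X$ is a finite $C$-space if for every sequence $\{\omega_n\}$ of finite covers of $X$ by functionally open sets there exist $k$ and finite families $\gamma_1,\dots,\gamma_k$ of pairwise disjoint functionally open sets such that each $\gamma_n$ refines $\omega_n$ and $\bigcup_{n=1}^k\gamma_n$ covers $X$. *)

theory Defs
  imports "HOL-Analysis.Analysis"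
begin

definition tychonoff_space :: "'a topology \<Rightarrow> bool" where
  "tychonoff_space X \<longleftrightarrow> completely_regular_space X \<and> Hausdorff_space X"

definition pseudocompact_space :: "'a topology \<Rightarrow> bool" where
  "pseudocompact_space X \<longleftrightarrow>
     (\<forall>f. continuous_map X euclideanreal f \<longrightarrow> (\<exists>B. \<forall>x\<in>topspace X. \<bar>f x\<bar> \<le> B))"

definition functionally_open :: "'a topology \<Rightarrow> 'a set \<Rightarrow> bool" where
  "functionally_open X U \<longleftrightarrow>
     (\<exists>f. continuous_map X euclideanreal f \<and> U = {x \<in> topspace X. f x \<noteq> 0})"

definition covers :: "'a topology \<Rightarrow> 'a set set \<Rightarrow> bool" where
  "covers X \<U> \<longleftrightarrow> \<Union>\<U> = topspace X"

definition refines :: "'a set set \<Rightarrow> 'a set set \<Rightarrow> bool" where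
  "refines \<V> \<U> \<longleftrightarrow> (\<forall>V\<in>\<V>. \<exists>U\<in>\<U>. V \<subseteq> U)"

definition C_space :: "'a topology \<Rightarrow> bool" where
  "C_space X \<longleftrightarrow>
     (\<forall>\<omega> :: nat \<Rightarrow> 'a set set.
        (\<forall>n. covers X (\<omega> n) \<and> locally_finite_in X (\<omega> n) \<and>
             (\<forall>U\<in>\<omega> n. functionally_open X U))
        \<longrightarrow> (\<exists>\<gamma> :: nat \<Rightarrow> 'a set set.
               (\<forall>n. pairwise disjnt (\<gamma> n) \<and> (\<forall>V\<in>\<gamma> n. openin X V) \<and>
                    refines (\<gamma> n) (\<omega> n)) \<and>
               covers X (\<Union>n. \<gamma> n) \<and>
               locally_finite_in X (\<Union>n. \<gamma> n) \<and>
               (\<forall>V\<in>(\<Union>n. \<gamma> n). functionally_open X V)))"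

definition finite_C_space :: "'a topology \<Rightarrow> bool" where
  "finite_C_space X \<longleftrightarrow>
     (\<forall>\<omega> :: nat \<Rightarrow> 'a set set.
        (\<forall>n. finite (\<omega> n) \<and> covers X (\<omega> n) \<and> (\<forall>U\<in>\<omega> n. functionally_open X U))
        \<longrightarrow> (\<exists>k::nat. \<exists>\<gamma> :: nat \<Rightarrow> 'a set set.
               (\<forall>n\<in>{1..k}. finite (\<gamma> n) \<and> pairwise disjnt (\<gamma> n) \<and>
                    (\<forall>V\<in>\<gamma> n. functionally_open X V) \<and> refines (\<gamma> n) (\<omega> n)) \<and>
               covers X (\<Union>n\<in>{1..k}. \<gamma> n)))"

end

theory Submission imports Defs begin

text \<open>A pseudocompact space admits no locally finite sequence of nonempty cozero sets \<open>U\<^sub>n\<close>: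
  writing \<open>U\<^sub>n\<close> as the cozero set of \<open>g\<^sub>n\<close> and picking \<open>x\<^sub>n \<in> U\<^sub>n\<close>, the locally finite sum
  \<open>\<Sum>\<^sub>n n \<bar>g\<^sub>n\<bar> / \<bar>g\<^sub>n(x\<^sub>n)\<bar>\<close> would be an unbounded continuous function. So a locally finite family
  of cozero sets has only finitely many nonempty members: the covers in both definitions are
  essentially finite, and a \<open>C\<close>-refinement consists of finitely many nonempty sets, which fit
  into finitely many indices.\<close>

lemma functionally_open_imp_openin:
  assumes "functionally_open X U"
  shows "openin X U"
proof -
  obtain g where g: "continuous_map X euclideanreal g" and U: "U = {x \<in> topspace X. g x \<noteq> 0}"
    using assms unfolding functionally_open_def by blast
  have "openin X {x \<in> topspace X. g x \<in> -{0}}"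
    by (rule openin_continuous_map_preimage[OF g]) auto
  then show ?thesis
    using U by simp
qed

lemma functionally_open_subset_topspace: "functionally_open X U \<Longrightarrow> U \<subseteq> topspace X"
  unfolding functionally_open_def by auto

lemma continuous_map_locally_finite_sum:
  fixes h :: "'i \<Rightarrow> 'a \<Rightarrow> real"
  assumes cont: "\<And>i. continuous_map X euclideanreal (h i)"
    and support: "\<And>i x. x \<in> topspace X \<Longrightarrow> x \<notin> U i \<Longrightarrow> h i x = 0"
    and lf: "\<And>x. x \<in> topspace X \<Longrightarrow> \<exists>V. openin X V \<and> x \<in> V \<and> finite {i. U i \<inter> V \<noteq> {}}"
  shows "continuous_map X euclideanreal (\<lambda>x. \<Sum>i | x \<in> U i. h i x)"
proof -
  define I where "I = {V. openin X V \<and> finite {i. U i \<inter> V \<noteq> {}}}"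
  define f where "f V x = (\<Sum>i | U i \<inter> V \<noteq> {}. h i x)" for V x
  have local_sum: "f V x = (\<Sum>i | x \<in> U i. h i x)"
    if "V \<in> I" "x \<in> V" "x \<in> topspace X" for V x
    unfolding f_def
    by (rule sum.mono_neutral_right) (use that support in \<open>auto simp: I_def\<close>)
  show ?thesis
  proof (rule pasting_lemma[where I=I and T="\<lambda>V. V" and f=f])
    show "continuous_map (subtopology X V) euclideanreal (f V)" if "V \<in> I" for V
      unfolding f_def using that
      by (intro continuous_map_sum continuous_map_from_subtopology cont) (auto simp: I_def)
    show "\<exists>V. V \<in> I \<and> x \<in> V \<and> (\<Sum>i | x \<in> U i. h i x) = f V x" if "x \<in> topspace X" for x
      using lf[OF that] local_sum that unfolding I_def by fastforce
  qed (use local_sum in \<open>auto simp: I_def\<close>)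
qed

lemma pseudocompact_no_locally_finite_sequence:
  fixes U :: "nat \<Rightarrow> 'a set"
  assumes ps: "pseudocompact_space X"
    and fo: "\<And>n. functionally_open X (U n)" and nonempty: "\<And>n. U n \<noteq> {}"
    and lf: "\<And>x. x \<in> topspace X \<Longrightarrow> \<exists>V. openin X V \<and> x \<in> V \<and> finite {n. U n \<inter> V \<noteq> {}}"
  shows False
proof -
  obtain g where g: "\<And>n. continuous_map X euclideanreal (g n)"
    and gU: "\<And>n. U n = {x \<in> topspace X. g n x \<noteq> 0}"
    using fo unfolding functionally_open_def by metis
  have "\<forall>n. \<exists>x. x \<in> U n"
    using nonempty by blast
  then obtain x where xU: "\<And>n. x n \<in> U n"
    by metis
  define h where "h n y = real n / \<bar>g n (x n)\<bar> * \<bar>g n y\<bar>" for n y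
  define F where "F y = (\<Sum>m | y \<in> U m. h m y)" for y
  have "continuous_map X euclideanreal F"
    unfolding F_def
  proof (rule continuous_map_locally_finite_sum[OF _ _ lf])
    show "continuous_map X euclideanreal (h n)" for n
      unfolding h_def by (intro continuous_map_real_mult_left continuous_map_real_abs g)
    show "h n y = 0" if "y \<in> topspace X" "y \<notin> U n" for n y
      using that gU[of n] by (simp add: h_def)
  qed
  then obtain B where B: "\<And>y. y \<in> topspace X \<Longrightarrow> \<bar>F y\<bar> \<le> B"
    using ps unfolding pseudocompact_space_def by blast
  define n where "n = Suc (nat \<lceil>B\<rceil>)"
  have xn: "x n \<in> topspace X" "g n (x n) \<noteq> 0"
    using xU[of n] gU[of n] by auto
  obtain V where "x n \<in> V" "finite {m. U m \<inter> V \<noteq> {}}"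
    using lf[OF xn(1)] by blast
  then have "finite {m. x n \<in> U m}"
    by (elim rev_finite_subset) blast
  then have "h n (x n) \<le> F (x n)"
    unfolding F_def by (intro member_le_sum) (auto simp: xU h_def)
  moreover have "h n (x n) = real n"
    using xn(2) by (simp add: h_def)
  ultimately show False
    using B[OF xn(1)] unfolding n_def by linarith
qed

lemma locally_finite_in_inj_family:
  assumes lf: "locally_finite_in X \<F>" and inj: "inj U" and U: "\<And>i. U i \<in> \<F>"
    and x: "x \<in> topspace X"
  shows "\<exists>V. openin X V \<and> x \<in> V \<and> finite {i. U i \<inter> V \<noteq> {}}"
proof -
  obtain V where V: "openin X V" "x \<in> V" "finite {W \<in> \<F>. W \<inter> V \<noteq> {}}"
    using lf x unfolding locally_finite_in_def by blast
  have "{i. U i \<inter> V \<noteq> {}} \<subseteq> U -` {W \<in> \<F>. W \<inter> V \<noteq> {}}"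
    using U by blast
  then have "finite {i. U i \<inter> V \<noteq> {}}"
    using finite_vimageI[OF V(3) inj] finite_subset by blast
  with V show ?thesis
    by blast
qed

lemma pseudocompact_locally_finite_functionally_open_finite:
  assumes ps: "pseudocompact_space X" and lf: "locally_finite_in X \<F>"
    and fo: "\<And>U. U \<in> \<F> \<Longrightarrow> functionally_open X U"
  shows "finite {U \<in> \<F>. U \<noteq> {}}"
proof (rule ccontr)
  assume "infinite {U \<in> \<F>. U \<noteq> {}}"
  then obtain U :: "nat \<Rightarrow> 'a set" where inj: "inj U" and U: "\<And>n. U n \<in> \<F>" "\<And>n. U n \<noteq> {}"
    unfolding infinite_iff_countable_subset by blast
  show False
  proof (rule pseudocompact_no_locally_finite_sequence[OF ps])
    show "functionally_open X (U n)" for n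
      using fo U(1) .
    show "U n \<noteq> {}" for n
      by (rule U(2))
    show "\<exists>V. openin X V \<and> x \<in> V \<and> finite {n. U n \<inter> V \<noteq> {}}" if "x \<in> topspace X" for x
      using locally_finite_in_inj_family[OF lf inj U(1) that] .
  qed
qed

lemma finite_subset_UN_lessThan:
  fixes \<gamma> :: "nat \<Rightarrow> 'a set"
  assumes "finite A" "A \<subseteq> (\<Union>n. \<gamma> n)"
  obtains k where "A \<subseteq> (\<Union>m<k. \<gamma> m)"
  using assms
proof (induction A arbitrary: thesis rule: finite_induct)
  case empty
  then show ?case by blast
next
  case (insert a A)
  obtain k where "A \<subseteq> (\<Union>m<k. \<gamma> m)"
    using insert.IH insert.prems(2) by blast
  moreover obtain n where "a \<in> \<gamma> n"
    using insert.prems(2) by blast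
  ultimately have "insert a A \<subseteq> (\<Union>m<max k (Suc n). \<gamma> m)"
    by force
  then show ?case
    by (rule insert.prems(1))
qed

lemma pseudocompact_cover_finitely_many_indices:
  fixes \<gamma> :: "nat \<Rightarrow> 'a set set"
  assumes ps: "pseudocompact_space X" and cov: "covers X (\<Union>n. \<gamma> n)"
    and lf: "locally_finite_in X (\<Union>n. \<gamma> n)"
    and fo: "\<And>V. V \<in> (\<Union>n. \<gamma> n) \<Longrightarrow> functionally_open X V"
  obtains k where "\<And>n. finite {V \<in> \<gamma> n. V \<noteq> {}}" "covers X (\<Union>m<k. {V \<in> \<gamma> m. V \<noteq> {}})"
proof -
  define A where "A = {V \<in> (\<Union>n. \<gamma> n). V \<noteq> {}}"
  have "finite A"
    unfolding A_def using pseudocompact_locally_finite_functionally_open_finite[OF ps lf fo] .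
  moreover have "A \<subseteq> (\<Union>n. \<gamma> n)"
    unfolding A_def by blast
  ultimately obtain k where k: "A \<subseteq> (\<Union>m<k. \<gamma> m)"
    by (rule finite_subset_UN_lessThan)
  have "finite {V \<in> \<gamma> n. V \<noteq> {}}" for n
    by (rule finite_subset[OF _ \<open>finite A\<close>]) (auto simp: A_def)
  moreover have "topspace X \<subseteq> \<Union>(\<Union>m<k. {V \<in> \<gamma> m. V \<noteq> {}})"
  proof
    fix y assume "y \<in> topspace X"
    then obtain V where V: "V \<in> A" "y \<in> V"
      using cov unfolding covers_def A_def by blast
    then obtain m where "m < k" "V \<in> \<gamma> m"
      using k by blast
    with V show "y \<in> \<Union>(\<Union>m<k. {V \<in> \<gamma> m. V \<noteq> {}})"
      by blast
  qed
  moreover have "\<Union>(\<Union>m<k. {V \<in> \<gamma> m. V \<noteq> {}}) \<subseteq> topspace X"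
    using fo functionally_open_subset_topspace by blast
  ultimately show thesis
    by (intro that) (auto simp: covers_def)
qed

lemma C_space_imp_finite_C_space:
  assumes ps: "pseudocompact_space X" and C: "C_space X"
  shows "finite_C_space X"
  unfolding finite_C_space_def
proof (intro allI impI)
  fix \<omega> :: "nat \<Rightarrow> 'a set set"
  assume \<omega>: "\<forall>n. finite (\<omega> n) \<and> covers X (\<omega> n) \<and> (\<forall>U\<in>\<omega> n. functionally_open X U)"
  \<comment> \<open>A finite C-space indexes its covers from 1, a C-space from 0.\<close>
  have "\<forall>n. covers X (\<omega> (Suc n)) \<and> locally_finite_in X (\<omega> (Suc n)) \<and>
            (\<forall>U\<in>\<omega> (Suc n). functionally_open X U)"
  proof (intro allI conjI)
    fix n
    show "covers X (\<omega> (Suc n))" "\<forall>U\<in>\<omega> (Suc n). functionally_open X U"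
      using \<omega> by blast+
    then show "locally_finite_in X (\<omega> (Suc n))"
      using \<omega> unfolding covers_def by (simp add: finite_imp_locally_finite_in)
  qed
  then obtain \<gamma> where
    "(\<forall>n. pairwise disjnt (\<gamma> n) \<and> (\<forall>V\<in>\<gamma> n. openin X V) \<and> refines (\<gamma> n) (\<omega> (Suc n))) \<and>
     covers X (\<Union>n. \<gamma> n) \<and> locally_finite_in X (\<Union>n. \<gamma> n) \<and>
     (\<forall>V\<in>(\<Union>n. \<gamma> n). functionally_open X V)"
    using C unfolding C_space_def by (elim allE[of _ "\<lambda>n. \<omega> (Suc n)"] impE exE)
  then have \<gamma>: "\<And>n. pairwise disjnt (\<gamma> n)" "\<And>n. refines (\<gamma> n) (\<omega> (Suc n))"
    and fo: "\<And>V. V \<in> (\<Union>n. \<gamma> n) \<Longrightarrow> functionally_open X V"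
    and cover: "covers X (\<Union>n. \<gamma> n)" and lf: "locally_finite_in X (\<Union>n. \<gamma> n)"
    by blast+
  obtain k where fin: "\<And>n. finite {V \<in> \<gamma> n. V \<noteq> {}}"
    and cov: "covers X (\<Union>m<k. {V \<in> \<gamma> m. V \<noteq> {}})"
    using pseudocompact_cover_finitely_many_indices[OF ps cover lf fo] by blast
  define \<gamma>' where "\<gamma>' n = {V \<in> \<gamma> (n - 1). V \<noteq> {}}" for n
  show "\<exists>k \<gamma>. (\<forall>n\<in>{1..k}. finite (\<gamma> n) \<and> pairwise disjnt (\<gamma> n) \<and>
                 (\<forall>V\<in>\<gamma> n. functionally_open X V) \<and> refines (\<gamma> n) (\<omega> n)) \<and>
               covers X (\<Union>n\<in>{1..k}. \<gamma> n)"
  proof (intro exI conjI ballI)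
    fix n :: nat assume "n \<in> {1..k}"
    then have "Suc (n - 1) = n" by simp
    then show "refines (\<gamma>' n) (\<omega> n)"
      using \<gamma>(2)[of "n - 1"] unfolding refines_def \<gamma>'_def by auto
    show "finite (\<gamma>' n)"
      unfolding \<gamma>'_def by (rule fin)
    show "pairwise disjnt (\<gamma>' n)"
      using \<gamma>(1) unfolding \<gamma>'_def by (rule pairwise_subset) auto
    show "functionally_open X V" if "V \<in> \<gamma>' n" for V
      using fo that unfolding \<gamma>'_def by blast
  next
    have "(\<Union>n\<in>{1..k}. \<gamma>' n) = (\<Union>m<k. {V \<in> \<gamma> m. V \<noteq> {}})"
      unfolding image_Suc_lessThan[symmetric] \<gamma>'_def by simp
    then show "covers X (\<Union>n\<in>{1..k}. \<gamma>' n)"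
      using cov by simp
  qed
qed

lemma finite_C_space_imp_C_space:
  assumes ps: "pseudocompact_space X" and C: "finite_C_space X"
  shows "C_space X"
  unfolding C_space_def
proof (intro allI impI)
  fix \<omega> :: "nat \<Rightarrow> 'a set set"
  assume \<omega>: "\<forall>n. covers X (\<omega> n) \<and> locally_finite_in X (\<omega> n) \<and> (\<forall>U\<in>\<omega> n. functionally_open X U)"
  define \<omega>' where "\<omega>' n = {U \<in> \<omega> n. U \<noteq> {}}" for n
  have "\<forall>n. finite (\<omega>' n) \<and> covers X (\<omega>' n) \<and> (\<forall>U\<in>\<omega>' n. functionally_open X U)"
  proof (intro allI conjI)
    fix n
    show "finite (\<omega>' n)"
      unfolding \<omega>'_def using \<omega> by (intro pseudocompact_locally_finite_functionally_open_finite[OF ps]) auto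
    have "\<Union>(\<omega>' n) = \<Union>(\<omega> n)"
      unfolding \<omega>'_def by blast
    then show "covers X (\<omega>' n)"
      using \<omega> unfolding covers_def by simp
    show "\<forall>U\<in>\<omega>' n. functionally_open X U"
      using \<omega> unfolding \<omega>'_def by auto
  qed
  then obtain k \<gamma> where \<gamma>: "\<forall>n\<in>{1..k}. finite (\<gamma> n) \<and> pairwise disjnt (\<gamma> n) \<and>
                    (\<forall>V\<in>\<gamma> n. functionally_open X V) \<and> refines (\<gamma> n) (\<omega>' n)"
    and cov: "covers X (\<Union>n\<in>{1..k}. \<gamma> n)"
    using C unfolding finite_C_space_def by blast
  define \<gamma>' where "\<gamma>' n = (if n \<in> {1..k} then \<gamma> n else {})" for n
  have union: "(\<Union>n. \<gamma>' n) = (\<Union>n\<in>{1..k}. \<gamma> n)"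
    unfolding \<gamma>'_def by auto
  have fo: "functionally_open X V" if "V \<in> (\<Union>n. \<gamma>' n)" for V
    using that \<gamma> unfolding union by blast
  show "\<exists>\<gamma>. (\<forall>n. pairwise disjnt (\<gamma> n) \<and> (\<forall>V\<in>\<gamma> n. openin X V) \<and> refines (\<gamma> n) (\<omega> n)) \<and>
           covers X (\<Union>n. \<gamma> n) \<and> locally_finite_in X (\<Union>n. \<gamma> n) \<and>
           (\<forall>V\<in>(\<Union>n. \<gamma> n). functionally_open X V)"
  proof (intro exI[of _ \<gamma>'] conjI allI ballI)
    fix n
    show "pairwise disjnt (\<gamma>' n)"
      using \<gamma> by (simp add: \<gamma>'_def)
    show "openin X V" if "V \<in> \<gamma>' n" for V
      using that fo functionally_open_imp_openin by blast
    have "refines (\<gamma> n) (\<omega>' n)" if "n \<in> {1..k}"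
      using that \<gamma> by blast
    then show "refines (\<gamma>' n) (\<omega> n)"
      unfolding \<gamma>'_def \<omega>'_def refines_def by auto
  next
    show "covers X (\<Union>n. \<gamma>' n)"
      unfolding union by (rule cov)
    have "finite (\<Union>n\<in>{1..k}. \<gamma> n)"
      using \<gamma> by (intro finite_UN_I) auto
    then show "locally_finite_in X (\<Union>n. \<gamma>' n)"
      using cov unfolding union covers_def by (simp add: finite_imp_locally_finite_in)
  qed (rule fo)
qed

theorem proposition2p1:
  fixes X :: "'a topology"
  assumes "tychonoff_space X" and "pseudocompact_space X"
  shows "C_space X \<longleftrightarrow> finite_C_space X"
  using C_space_imp_finite_C_space[OF assms(2)] finite_C_space_imp_C_space[OF assms(2)] by blast

end
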